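(* Let $x,y\in X$ with $\deg(x)=\deg(y)=i$ for some positive integer $i$, and assume there are integers $n>i+2$ and $k\geq1$ such that $T^j(x)_n=T^j(y)_n$ for all $j\geq k$ and the infinite path $\big(T^j(x)_n\big)_{j\geq k}$ in $G_n$ begins with the cycle $c_{n,i}$ (that is, $\big(T^{k+t}(x)_n\big)_{t=0}^{|c_{n,i}|}$ is exactly the cycle $c_{n,i}$). Then $T^j(x)_n=T^j(y)_n$ for all $j\geq0$.
   Context: Paths and cycles: a graph is $G=(V,E)$ with $V$ finite and $E\subset V\times V$. A path is a finite sequence of vertices $(u_0,\dots,u_L)$ with $(u_j,u_{j+1})\in E$; its length is $|\cdot|=L$; a cycle is a path with $u_0=u_L$. For paths where one ends where the next starts, $+$ denotes concatenation and $a\,c$ means the cycle $c$ traversed $a$ times. Construction: $G_0=(V_0,E_0)$ with $V_0=\{v_{0,0}\}$, $E_0=\{e_{0,0}\}$, $e_{0,0}=(v_{0,0},v_{0,0})$. For $n\geq1$, $G_n=(V_n,E_n)$ consists of a vertex $v_{n,0}$, the loop $e_{n,0}=(v_{n,0},v_{n,0})$, and $n$ cycles $c_{n,1},\dots,c_{n,n}$, each starting and ending at $v_{n,0}$, whose vertices other than $v_{n,0}$ are pairwise distinct (within each cycle and across cycles); $V_n$ is the set of all these vertices and $E_n$ consists of $e_{n,0}$ and the edges of the cycles. The maps $\varphi_n\colon V_{n+1}\to V_n$ and the lengths of the cycles $c_{n+1,i}$ are defined together: $\varphi_n(v_{n+1,0})=v_{n,0}$, and for each $i$ a path $P_{n,i}$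 in $G_n$ from $v_{n,0}$ to $v_{n,0}$ is given; $c_{n+1,i}$ has length $|P_{n,i}|$ and $\varphi_n$ maps its $j$-th vertex to the $j$-th vertex of $P_{n,i}$ (written $\varphi_n(c_{n+1,i})=P_{n,i}$). The paths are: $P_{0,1}=10\,e_{0,0}$; for $n\geq1$: $P_{n,i}=e_{n,0}+2c_{n,i}+2c_{n,i+1}+\dots+2c_{n,n}+e_{n,0}$ for $2\leq i\leq n$; $P_{n,n+1}=(n+2)^2\big(\sum_{i=1}^n|c_{n,i}|\big)\,e_{n,0}$; and $P_{n,1}=(1\,e_{n,0}+2c_{n,1})+(2\,e_{n,0}+2c_{n,1})+\dots+(k_n\,e_{n,0}+2c_{n,1})+e_{n,0}+2c_{n,2}+\dots+2c_{n,n}+e_{n,0}$, where $k_n=2\big(1+\sum_{i=1}^n|c_{n,i}|\big)$. Let $X=\{x\in\prod_{n\geq0}V_n:\varphi_n(x_{n+1})=x_n\ \forall n\}$ with metric $d(x,y)=2^{-\min\{i:x_i\neq y_i\}}$ ($d(x,x)=0$); $X$ is a compact zero-dimensional metric space, and $T\colon X\to X$ defined by $T(x)=y$ iff $(x_n,y_n)\in E_n$ for all $n$ is a well-defined homeomorphism. Write $x_n$ for the $n$-th coordinate of $x$; for $z\in X$ the sequence $(T^j(z)_n)_{j\geq0}$ is an infinite path in $G_n$. Degree: for $v\in V_n$, $\deg(v)=+\infty$ if $v=v_{n,0}$ and $\deg(v)=i$ if $v$ is a vertex of $c_{n,i}$ different from $v_{n,0}$; for $x\in X$, $\deg(x)=\min_n\deg(x_n)$.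 *)

theory Defs
  imports Main "HOL-Library.Extended_Nat"
begin

text \<open>Vertices of every G_n are encoded as pairs of naturals: (0,0) is the
  base vertex v_{n,0}; (i,j) with 1 \<le> i \<le> n and 1 \<le> j < |c_{n,i}| is the
  j-th vertex of the cycle c_{n,i}. Paths are vertex lists (a path of
  length L is a list of L+1 vertices).\<close>

type_synonym vert = "nat \<times> nat"

definition v0 :: vert where "v0 = (0, 0)"

definition loop :: "vert list" where "loop = [v0, v0]"

text \<open>Concatenation p + q of paths (last p = hd q).\<close>
definition pcat :: "vert list \<Rightarrow> vert list \<Rightarrow> vert list" where
  "pcat p q = p @ tl q"

fun prep :: "nat \<Rightarrow> vert list \<Rightarrow> vert list" where
  "prep 0 c = [hd c]"
| "prep (Suc a) c = pcat c (prep a c)"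

definition pcats :: "vert list list \<Rightarrow> vert list" where
  "pcats ps = foldr pcat ps [v0]"

text \<open>The cycle c_{n,i} given the length function l i = |c_{n,i}|.\<close>
definition cycl :: "(nat \<Rightarrow> nat) \<Rightarrow> nat \<Rightarrow> vert list" where
  "cycl l i = v0 # map (\<lambda>j. (i, j)) [1..<l i] @ [v0]"

text \<open>The paths P_{n,i} in G_n, given the cycle lengths l of G_n.\<close>
definition Ppath :: "nat \<Rightarrow> (nat \<Rightarrow> nat) \<Rightarrow> nat \<Rightarrow> vert list" where
  "Ppath n l i =
    (if n = 0 then prep 10 loop
     else (let S = (\<Sum>m\<in>{1..n}. l m); k = 2 * (1 + S) in
       if i = 1 then
         pcats (map (\<lambda>a. pcat (prep a loop) (prep 2 (cycl l 1))) [1..<k + 1]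
                @ [loop] @ map (\<lambda>m. prep 2 (cycl l m)) [2..<n + 1] @ [loop])
       else if i \<le> n then
         pcats ([loop] @ map (\<lambda>m. prep 2 (cycl l m)) [i..<n + 1] @ [loop])
       else prep ((n + 2)^2 * S) loop))"

text \<open>clen n i = |c_{n,i}| for 1 \<le> i \<le> n (0 otherwise).\<close>
primrec clen :: "nat \<Rightarrow> nat \<Rightarrow> nat" where
  "clen 0 = (\<lambda>i. 0)"
| "clen (Suc n) = (\<lambda>i. if 1 \<le> i \<and> i \<le> Suc n then length (Ppath n (clen n) i) - 1 else 0)"

definition cyc :: "nat \<Rightarrow> nat \<Rightarrow> vert list" where
  "cyc n i = cycl (clen n) i"

definition V :: "nat \<Rightarrow> vert set" where
  "V n = {v0} \<union> {(i, j). 1 \<le> i \<and> i \<le> n \<and> 1 \<le> j \<and> j < clen n i}"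

definition E :: "nat \<Rightarrow> (vert \<times> vert) set" where
  "E n = {(v0, v0)} \<union> (\<Union>i\<in>{1..n}. set (zip (cyc n i) (tl (cyc n i))))"

definition phi :: "nat \<Rightarrow> vert \<Rightarrow> vert" where
  "phi n v = (if v = v0 then v0 else Ppath n (clen n) (fst v) ! snd v)"

definition X :: "(nat \<Rightarrow> vert) set" where
  "X = {x. (\<forall>n. x n \<in> V n) \<and> (\<forall>n. phi n (x (Suc n)) = x n)}"

definition T :: "(nat \<Rightarrow> vert) \<Rightarrow> (nat \<Rightarrow> vert)" where
  "T x = (THE y. y \<in> X \<and> (\<forall>n. (x n, y n) \<in> E n))"

definition vdeg :: "vert \<Rightarrow> enat" where
  "vdeg v = (if v = v0 then \<infinity> else enat (fst v))"

definition deg :: "(nat \<Rightarrow> vert) \<Rightarrow> enat" where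
  "deg x = (INF n. vdeg (x n))"

end

theory Submission
  imports Defs
begin

text \<open>Shift both orbits so that at level n they sit at the first vertex (i,1) of c_{n,i}, and go
  up level by level. An orbit of degree i inside a copy of c_{l,i} in P_{l,i} must itself lie in
  c_{l+1,i}, and both orbits must use the same copy: P_{l,i} is a word of loops and cycles, and if
  they sat in different copies of c_{l,i}, then following them to the first place where the words
  after the two copies differ shows two different vertices at level n, although the orbits agree
  there. Hence at level n+s both orbits are at the same vertex (i,p) with p > s, and running s
  steps back along c_{n+s,i} shows that they agreed at all earlier times too.\<close>

subsection \<open>Paths as words over loops and cycles\<close>

text \<open>The letter None stands for the loop e_{n,0}, Some m for the cycle c_{n,m}; letter_seg
  omits the closing v0, so that a word path is the concatenation of its letters' segments.\<close>

fun letter_seg :: "(nat \<Rightarrow> nat) \<Rightarrow> nat option \<Rightarrow> vert list" where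
  "letter_seg l None = [v0]"
| "letter_seg l (Some m) = v0 # map (\<lambda>j. (m, j)) [1..<l m]"

definition word_path :: "(nat \<Rightarrow> nat) \<Rightarrow> nat option list \<Rightarrow> vert list" where
  "word_path l w = concat (map (letter_seg l) w) @ [v0]"

definition word_len :: "(nat \<Rightarrow> nat) \<Rightarrow> nat option list \<Rightarrow> nat" where
  "word_len l w = length (concat (map (letter_seg l) w))"

definition is_word :: "nat \<Rightarrow> nat option list \<Rightarrow> bool" where
  "is_word n w \<longleftrightarrow> (\<forall>m. Some m \<in> set w \<longrightarrow> 1 \<le> m \<and> m \<le> n)"

definition cycle_vertex :: "nat \<Rightarrow> nat \<Rightarrow> vert" where
  "cycle_vertex m t = (if t = 0 then v0 else (m, t))"

lemma v0_eq: "v0 = (0, 0)"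
  by (simp add: v0_def)

lemma letter_seg_nonempty [simp]: "letter_seg l a \<noteq> []"
  and hd_letter_seg [simp]: "hd (letter_seg l a) = v0"
  by (cases a; simp)+

lemma length_letter_seg [simp]:
  "length (letter_seg l None) = 1" "length (letter_seg l (Some m)) = max 1 (l m)"
  by auto

lemma nth_letter_seg_Some: "t < l m \<Longrightarrow> letter_seg l (Some m) ! t = cycle_vertex m t"
  by (cases t) (auto simp: cycle_vertex_def v0_eq nth_Cons')

lemma word_path_Cons: "word_path l (a # w) = letter_seg l a @ word_path l w"
  by (simp add: word_path_def)

lemma word_path_append: "word_path l (u @ v) = concat (map (letter_seg l) u) @ word_path l v"
  by (simp add: word_path_def)

lemma hd_word_path: "hd (word_path l w) = v0"
  by (cases w) (auto simp: word_path_def)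

lemma word_path_eq_v0_Cons: "word_path l w = v0 # tl (word_path l w)"
  using hd_word_path[of l w] by (cases "word_path l w") (auto simp: word_path_def)

lemma nth_word_path_0 [simp]: "word_path l w ! 0 = v0"
  by (metis word_path_eq_v0_Cons nth_Cons_0)

lemma word_len_Nil [simp]: "word_len l [] = 0"
  and word_len_Cons [simp]: "word_len l (a # w) = length (letter_seg l a) + word_len l w"
  and word_len_append [simp]: "word_len l (u @ v) = word_len l u + word_len l v"
  by (auto simp: word_len_def)

lemma word_len_replicate_None [simp]: "word_len l (replicate a None) = a"
  by (induction a) auto

lemma is_word_drop: "is_word n w \<Longrightarrow> is_word n (drop c w)"
  unfolding is_word_def by (meson in_set_dropD)

lemma word_path_replicate_None: "word_path l (replicate a None) = replicate (Suc a) v0"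
  by (induction a) (auto simp: word_path_def)

lemma length_word_path [simp]: "length (word_path l w) = word_len l w + 1"
  by (simp add: word_path_def word_len_def)

lemma nth_word_path_word_len: "word_path l w ! word_len l w = v0"
  by (simp add: word_path_def word_len_def nth_append)

lemma word_len_take_Suc:
  "c < length w \<Longrightarrow> word_len l (take (Suc c) w) = word_len l (take c w) + length (letter_seg l (w ! c))"
  by (simp add: take_Suc_conv_app_nth)

lemma word_len_take_mono: "c \<le> d \<Longrightarrow> word_len l (take c w) \<le> word_len l (take d w)"
  by (metis le_add1 le_add_diff_inverse take_add word_len_append)

lemma word_len_take_drop: "word_len l w = word_len l (take c w) + word_len l (drop c w)"
  by (metis append_take_drop_id word_len_append)

lemma length_letter_seg_le_word_len: "a \<in> set w \<Longrightarrow> length (letter_seg l a) \<le> word_len l w"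
  by (induction w) auto

lemma nth_word_path_Cons_less: "t < length (letter_seg l a) \<Longrightarrow> word_path l (a # w) ! t = letter_seg l a ! t"
  by (simp add: word_path_Cons nth_append)

lemma nth_word_path_Cons_shift: "word_path l (a # w) ! (length (letter_seg l a) + t) = word_path l w ! t"
  by (simp add: word_path_Cons nth_append)

lemma nth_word_path_drop:
  "c \<le> length w \<Longrightarrow> word_path l w ! (word_len l (take c w) + t) = word_path l (drop c w) ! t"
  using word_path_append[of l "take c w" "drop c w"] by (simp add: word_len_def nth_append)

lemma nth_word_path_in_letter:
  assumes "t < word_len l w"
  obtains c where "c < length w" "word_len l (take c w) \<le> t"
    "t < word_len l (take c w) + length (letter_seg l (w ! c))"
    "word_path l w ! t = letter_seg l (w ! c) ! (t - word_len l (take c w))"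
  using assms
proof (induction w arbitrary: t thesis)
  case (Cons a w)
  show ?case
  proof (cases "t < length (letter_seg l a)")
    case True
    then show ?thesis by (intro Cons.prems(1)[of 0]) (auto simp: nth_word_path_Cons_less)
  next
    case False
    then obtain t' where t': "t = length (letter_seg l a) + t'"
      by (metis le_Suc_ex not_less)
    with Cons.prems(2) have "t' < word_len l w" by simp
    then obtain c where "c < length w" "word_len l (take c w) \<le> t'"
      "t' < word_len l (take c w) + length (letter_seg l (w ! c))"
      "word_path l w ! t' = letter_seg l (w ! c) ! (t' - word_len l (take c w))"
      using Cons.IH by blast
    with t' show ?thesis by (intro Cons.prems(1)[of "Suc c"]) (auto simp: nth_word_path_Cons_shift)
  qed
qed simp

lemma nth_word_path_eq_cycle_pos:
  assumes "q < word_len l w" "word_path l w ! q = (i, p)" "1 \<le> p"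
  obtains a where "a < length w" "w ! a = Some i" "q = word_len l (take a w) + p" "p < l i"
proof -
  obtain c where c: "c < length w" "word_len l (take c w) \<le> q"
    "q < word_len l (take c w) + length (letter_seg l (w ! c))"
    "word_path l w ! q = letter_seg l (w ! c) ! (q - word_len l (take c w))"
    using nth_word_path_in_letter[OF assms(1)] by blast
  define ofs where "ofs = q - word_len l (take c w)"
  have ofs: "ofs < length (letter_seg l (w ! c))" "letter_seg l (w ! c) ! ofs = (i, p)"
    using c assms(2) by (auto simp: ofs_def)
  obtain m where m: "w ! c = Some m"
    using ofs assms(3) by (cases "w ! c") (auto simp: v0_eq)
  have "ofs < l m"
  proof (rule ccontr)
    assume "\<not> ofs < l m"
    then have "ofs = 0" using ofs(1) m by simp
    then show False using ofs(2) assms(3) m by (simp add: v0_eq)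
  qed
  then have "cycle_vertex m ofs = (i, p)"
    using ofs(2) m nth_letter_seg_Some[of ofs l m] by simp
  then have "m = i" "ofs = p"
    using assms(3) by (auto simp: cycle_vertex_def v0_eq split: if_splits)
  then show ?thesis using that[of c] c m \<open>ofs < l m\<close> by (auto simp: ofs_def)
qed

lemma set_word_path:
  "set (word_path l w) \<subseteq> insert v0 {(m, j). Some m \<in> set w \<and> 1 \<le> j \<and> j < l m}"
  by (induction w) (auto simp: word_path_def split: option.splits; case_tac a; auto)+

lemma pcat_word_path: "pcat (word_path l u) (word_path l w) = word_path l (u @ w)"
proof -
  have "word_path l (u @ w) = concat (map (letter_seg l) u) @ v0 # tl (word_path l w)"
    by (metis word_path_append word_path_eq_v0_Cons)
  then show ?thesis by (simp add: pcat_def word_path_def)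
qed

lemma prep_word_path: "prep a (word_path l w) = word_path l (concat (replicate a w))"
  by (induction a) (simp_all add: pcat_word_path hd_word_path word_path_def[of l "[]"])

lemma pcats_word_path: "pcats (map (word_path l) ws) = word_path l (concat ws)"
proof (induction ws)
  case (Cons w ws)
  then show ?case by (simp add: pcats_def pcat_word_path)
qed (simp add: pcats_def word_path_def)

lemma loop_word_path: "loop = word_path l [None]"
  by (simp add: loop_def word_path_def)

lemma cycl_word_path: "cycl l m = word_path l [Some m]"
  by (simp add: cycl_def word_path_def)

definition P_word :: "nat \<Rightarrow> (nat \<Rightarrow> nat) \<Rightarrow> nat \<Rightarrow> nat option list" where
  "P_word n l i =
    (if n = 0 then replicate 10 None
     else (let S = (\<Sum>m\<in>{1..n}. l m); k = 2 * (1 + S) in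
       if i = 1 then
         concat (map (\<lambda>a. replicate a None @ [Some 1, Some 1]) [1..<k + 1])
           @ [None] @ concat (map (\<lambda>m. [Some m, Some m]) [2..<n + 1]) @ [None]
       else if i \<le> n then
         [None] @ concat (map (\<lambda>m. [Some m, Some m]) [i..<n + 1]) @ [None]
       else replicate ((n + 2)^2 * S) None))"

lemma Ppath_word_path: "Ppath n l i = word_path l (P_word n l i)"
proof -
  have cycles_1: "map (\<lambda>a. pcat (prep a loop) (prep 2 (cycl l 1))) xs
      = map (word_path l) (map (\<lambda>a. replicate a None @ [Some 1, Some 1]) xs)" for xs
    by (simp add: loop_word_path[of l] cycl_word_path prep_word_path pcat_word_path numeral_2_eq_2)
  have cycles: "map (\<lambda>m. prep 2 (cycl l m)) xs = map (word_path l) (map (\<lambda>m. [Some m, Some m]) xs)" for xs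
    by (simp add: cycl_word_path prep_word_path numeral_2_eq_2)
  have single_loop: "[loop] = map (word_path l) [[None]]"
    by (simp add: loop_word_path[of l])
  have loops: "prep a loop = word_path l (replicate a None)" for a
    by (simp add: loop_word_path[of l] prep_word_path)
  show ?thesis
  proof (cases "n = 0")
    case True
    then show ?thesis by (simp add: Ppath_def P_word_def loops)
  next
    case False
    show ?thesis
      unfolding Ppath_def P_word_def Let_def unfolding cycles_1 cycles single_loop unfolding loops
      by (simp only: False if_False map_append[symmetric] pcats_word_path concat_append concat.simps
          append_Nil2 if_distrib[of "word_path l"] flip: list.map)
  qed
qed

lemma P_word_start:
  assumes "1 \<le> m" "m \<le> n"
  shows "P_word n l m = None # Some m # Some m # drop 3 (P_word n l m)"
proof (cases "m = 1")
  case True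
  define S where "S = (\<Sum>m\<in>{1..n}. l m)"
  have "[1..<2 * (1 + S) + 1] = 1 # [Suc 1..<2 * (1 + S) + 1]"
    by (rule upt_conv_Cons) simp
  then show ?thesis using assms True unfolding P_word_def Let_def S_def[symmetric] by simp
next
  case False
  have "[m..<n + 1] = m # [Suc m..<n + 1]" using assms by (intro upt_conv_Cons) simp
  then show ?thesis using assms False unfolding P_word_def Let_def by simp
qed

lemma P_word_top: "1 \<le> n \<Longrightarrow> P_word n l (Suc n) = replicate ((n + 2)^2 * (\<Sum>m\<in>{1..n}. l m)) None"
  by (simp add: P_word_def Let_def)

lemma P_word_letters: "Some m' \<in> set (P_word n l m) \<Longrightarrow> m \<le> m' \<and> m' \<le> n"
  unfolding P_word_def Let_def by (auto split: if_splits)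

lemma is_word_P_word: "1 \<le> m \<Longrightarrow> is_word n (P_word n l m)"
  using P_word_letters[of _ n l m] by (force simp: is_word_def)

lemma P_word_Suc_self: "\<exists>a. P_word n l (Suc n) = replicate a None"
  by (auto simp: P_word_def Let_def)

lemma hd_P_word: "P_word n l m \<noteq> [] \<Longrightarrow> hd (P_word n l m) = None"
  unfolding P_word_def Let_def by (auto simp: upt_conv_Cons)

lemma P_word_eq_split:
  assumes "1 \<le> i" "i < n" "n \<le> l"
  obtains pre \<mu> post where "P_word l L i = pre @ Some \<mu> # post" "2 \<le> \<mu>" "\<mu> \<le> n" "\<mu> \<noteq> i"
    "\<forall>a\<in>set pre. a = None \<or> a = Some 1 \<or> a = Some i" "Some i \<notin> set (Some \<mu> # post)"
proof (cases "i = 1")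
  case True
  define S where "S = (\<Sum>m\<in>{1..l}. L m)"
  define pre :: "nat option list"
    where "pre = concat (map (\<lambda>a. replicate a None @ [Some 1, Some 1]) [1..<2 * (1 + S) + 1]) @ [None]"
  define post where "post = Some 2 # concat (map (\<lambda>m. [Some m, Some m]) [3..<l + 1]) @ [None]"
  have "[2..<l + 1] = 2 # [3..<l + 1]" using assms True by (simp add: upt_conv_Cons)
  then have "P_word l L i = pre @ Some 2 # post"
    using assms True unfolding P_word_def Let_def S_def[symmetric] pre_def post_def by simp
  moreover have "\<forall>a\<in>set pre. a = None \<or> a = Some 1" unfolding pre_def by auto
  ultimately show ?thesis by (intro that) (use assms True in \<open>auto simp: post_def\<close>)
next
  case False
  define post where "post = Some (Suc i) # concat (map (\<lambda>m. [Some m, Some m]) [i+2..<l + 1]) @ [None]"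
  have "[i..<l + 1] = i # Suc i # [i+2..<l + 1]" using assms by (simp add: upt_conv_Cons)
  then have "P_word l L i = [None, Some i, Some i] @ Some (Suc i) # post"
    using assms False unfolding P_word_def Let_def post_def by simp
  then show ?thesis by (rule that) (use assms False in \<open>auto simp: post_def\<close>)
qed

lemma clen_Suc_eq:
  "1 \<le> m \<Longrightarrow> m \<le> Suc n \<Longrightarrow> clen (Suc n) m = word_len (clen n) (P_word n (clen n) m)"
  by (simp add: Ppath_word_path)

lemma length_Ppath: "1 \<le> m \<Longrightarrow> m \<le> Suc n \<Longrightarrow> length (Ppath n (clen n) m) = clen (Suc n) m + 1"
  by (simp add: clen_Suc_eq Ppath_word_path)

declare clen.simps(2) [simp del]

lemma clen_lower_bound: "1 \<le> m \<Longrightarrow> m \<le> n \<Longrightarrow> n + 2 \<le> clen n m"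
proof (induction n arbitrary: m)
  case (Suc n)
  show ?case
  proof (cases "n = 0")
    case True
    with Suc.prems show ?thesis by (simp add: clen_Suc_eq P_word_def)
  next
    case False
    show ?thesis
    proof (cases "m \<le> n")
      case True
      have "clen (Suc n) m = word_len (clen n) (None # Some m # Some m # drop 3 (P_word n (clen n) m))"
        using Suc.prems True clen_Suc_eq P_word_start by (metis le_SucI)
      also have "\<dots> \<ge> 2 * clen n m" by simp
      finally show ?thesis using Suc.IH[OF Suc.prems(1) True] by simp
    next
      case False
      then have m: "m = Suc n" using Suc.prems by simp
      have "n + 2 \<le> clen n 1" using Suc.IH \<open>n \<noteq> 0\<close> by simp
      also have "clen n 1 \<le> (\<Sum>m\<in>{1..n}. clen n m)"
        by (rule member_le_sum) (use \<open>n \<noteq> 0\<close> in auto)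
      finally have S: "n + 2 \<le> (\<Sum>m\<in>{1..n}. clen n m)" .
      have "clen (Suc n) m = (n + 2)^2 * (\<Sum>m\<in>{1..n}. clen n m)"
        using m \<open>n \<noteq> 0\<close> by (simp add: clen_Suc_eq P_word_top)
      also have "\<dots> \<ge> (n + 2)^2 * 1" using S by (intro mult_le_mono2) simp
      finally show ?thesis by (simp add: power2_eq_square)
    qed
  qed
qed simp

lemma clen_ge_2: "1 \<le> m \<Longrightarrow> m \<le> n \<Longrightarrow> 2 \<le> clen n m"
  using clen_lower_bound[of m n] by simp

lemma cyc_nth:
  "1 \<le> m \<Longrightarrow> m \<le> n \<Longrightarrow> t \<le> clen n m \<Longrightarrow>
   cyc n m ! t = (if t = 0 \<or> t = clen n m then v0 else (m, t))"
  using clen_ge_2[of m n] by (auto simp: cyc_def cycl_def nth_append nth_Cons' v0_eq)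

lemma length_cyc: "1 \<le> m \<Longrightarrow> m \<le> n \<Longrightarrow> length (cyc n m) = clen n m + 1"
  using clen_ge_2[of m n] by (simp add: cyc_def cycl_word_path)

definition cycle_next :: "nat \<Rightarrow> vert \<Rightarrow> vert" where
  "cycle_next n u = (if Suc (snd u) = clen n (fst u) then v0 else (fst u, Suc (snd u)))"

lemma V_iff: "u \<in> V n \<longleftrightarrow> u = v0 \<or> (1 \<le> fst u \<and> fst u \<le> n \<and> 1 \<le> snd u \<and> snd u < clen n (fst u))"
  by (cases u) (auto simp: V_def)

lemma V_nonbaseE:
  assumes "u \<in> V n" "u \<noteq> v0"
  obtains m t where "u = (m, t)" "1 \<le> m" "m \<le> n" "1 \<le> t" "t < clen n m"
  using assms by (cases u) (auto simp: V_iff)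

lemma cyc_nth_in_V: "1 \<le> m \<Longrightarrow> m \<le> n \<Longrightarrow> t \<le> clen n m \<Longrightarrow> cyc n m ! t \<in> V n"
  by (auto simp: cyc_nth V_iff)

lemma E_iff:
  "(u, w) \<in> E n \<longleftrightarrow> (u = v0 \<and> w = v0) \<or>
    (\<exists>m t. 1 \<le> m \<and> m \<le> n \<and> t < clen n m \<and> u = cyc n m ! t \<and> w = cyc n m ! Suc t)"
proof -
  have "(u, w) \<in> set (zip (cyc n m) (tl (cyc n m))) \<longleftrightarrow>
     (\<exists>t. t < clen n m \<and> u = cyc n m ! t \<and> w = cyc n m ! Suc t)" if "1 \<le> m" "m \<le> n" for m
    unfolding set_zip using length_cyc[OF that] by (auto simp: nth_tl)
  then show ?thesis unfolding E_def by auto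
qed

lemma E_loop: "(v0, v0) \<in> E n"
  unfolding E_iff by blast

lemma E_cyc_step: "1 \<le> m \<Longrightarrow> m \<le> n \<Longrightarrow> t < clen n m \<Longrightarrow> (cyc n m ! t, cyc n m ! Suc t) \<in> E n"
  unfolding E_iff by blast

lemma E_target_in_V:
  assumes "(u, w) \<in> E n"
  shows "w \<in> V n"
  using assms unfolding E_iff
proof (elim disjE exE conjE)
  fix m t
  assume "1 \<le> m" "m \<le> n" "t < clen n m" "w = cyc n m ! Suc t"
  then show ?thesis by (simp add: cyc_nth_in_V)
qed (simp add: V_def)

lemma E_from_nonbase:
  assumes "((m, t), w) \<in> E n" "1 \<le> t"
  shows "w = cycle_next n (m, t)"
proof -
  have "(m, t) \<noteq> v0" using assms(2) by (simp add: v0_eq)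
  then obtain m' t' where h: "1 \<le> m'" "m' \<le> n" "t' < clen n m'"
      "(m, t) = cyc n m' ! t'" "w = cyc n m' ! Suc t'"
    using assms(1) unfolding E_iff by blast
  then have "m = m'" "t = t'"
    using \<open>(m, t) \<noteq> v0\<close> by (auto simp: cyc_nth split: if_splits)
  then show ?thesis using h by (auto simp: cyc_nth cycle_next_def)
qed

lemma E_into_nonbase:
  assumes "(u, (m, r)) \<in> E n" "2 \<le> r"
  shows "u = (m, r - 1)"
proof -
  have "(m, r) \<noteq> v0" using assms(2) by (simp add: v0_eq)
  then obtain m' t' where h: "1 \<le> m'" "m' \<le> n" "t' < clen n m'"
      "u = cyc n m' ! t'" "(m, r) = cyc n m' ! Suc t'"
    using assms(1) unfolding E_iff by blast
  then have "m = m'" "r = Suc t'"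
    using \<open>(m, r) \<noteq> v0\<close> by (auto simp: cyc_nth split: if_splits)
  then show ?thesis using h assms(2) by (auto simp: cyc_nth)
qed

lemma E_from_v0:
  assumes "(v0, w) \<in> E n"
  shows "w = v0 \<or> (\<exists>m. 1 \<le> m \<and> m \<le> n \<and> w = (m, 1))"
proof (cases "w = v0")
  case False
  then obtain m t where h: "1 \<le> m" "m \<le> n" "t < clen n m" "v0 = cyc n m ! t" "w = cyc n m ! Suc t"
    using assms unfolding E_iff by blast
  then have "t = 0" by (auto simp: cyc_nth v0_eq split: if_splits)
  then show ?thesis using h clen_ge_2[of m n] by (auto simp: cyc_nth)
qed simp

lemma cycle_next_E:
  assumes "u \<in> V n" "u \<noteq> v0"
  shows "(u, cycle_next n u) \<in> E n"
proof -
  obtain m t where h: "u = (m, t)" "1 \<le> m" "m \<le> n" "1 \<le> t" "t < clen n m"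
    using V_nonbaseE[OF assms] .
  then have "cyc n m ! t = u" "cyc n m ! Suc t = cycle_next n u"
    by (auto simp: cyc_nth cycle_next_def)
  then show ?thesis using E_cyc_step[OF h(2,3,5)] by simp
qed

lemma E_nonbase_iff: "u \<in> V n \<Longrightarrow> u \<noteq> v0 \<Longrightarrow> (u, w) \<in> E n \<longleftrightarrow> w = cycle_next n u"
  by (metis V_nonbaseE E_from_nonbase cycle_next_E)

lemma word_path_successive_E:
  "is_word n w \<Longrightarrow> successively (\<lambda>u v. (u, v) \<in> E n) (word_path (clen n) w)"
proof (induction w)
  case Nil
  then show ?case by (simp add: word_path_def)
next
  case (Cons a w)
  have IH: "successively (\<lambda>u v. (u, v) \<in> E n) (word_path (clen n) w)"
    using Cons by (simp add: is_word_def)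
  have seg: "successively (\<lambda>u v. (u, v) \<in> E n) (letter_seg (clen n) a)
      \<and> (last (letter_seg (clen n) a), v0) \<in> E n"
  proof (cases a)
    case None
    then show ?thesis by (simp add: E_loop)
  next
    case (Some m)
    then have m: "1 \<le> m" "m \<le> n" using Cons.prems by (auto simp: is_word_def)
    have L: "2 \<le> clen n m" using clen_ge_2[OF m] .
    have seg_cyc: "letter_seg (clen n) (Some m) ! t = cyc n m ! t" if "t < clen n m" for t
      using that m by (simp add: nth_letter_seg_Some cycle_vertex_def cyc_nth)
    have "successively (\<lambda>u v. (u, v) \<in> E n) (letter_seg (clen n) (Some m))"
      unfolding successively_conv_nth
    proof (intro allI impI)
      fix t
      assume "Suc t < length (letter_seg (clen n) (Some m))"
      then have "Suc t < clen n m" using L by simp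
      then show "(letter_seg (clen n) (Some m) ! t, letter_seg (clen n) (Some m) ! Suc t) \<in> E n"
        using seg_cyc[of t] seg_cyc[of "Suc t"] E_cyc_step[OF m, of t] by simp
    qed
    moreover have "last (letter_seg (clen n) (Some m)) = cyc n m ! (clen n m - 1)"
      using L seg_cyc[of "clen n m - 1"] by (simp add: last_conv_nth)
    moreover have "cyc n m ! Suc (clen n m - 1) = v0" using L m by (simp add: cyc_nth)
    ultimately show ?thesis
      using Some L E_cyc_step[OF m, of "clen n m - 1"] by simp
  qed
  then show ?case
    using IH hd_word_path[of "clen n" w] word_path_eq_v0_Cons[of "clen n" w]
    by (auto simp: word_path_Cons successively_append_iff)
qed

lemma Ppath_successive_E: "1 \<le> m \<Longrightarrow> successively (\<lambda>u v. (u, v) \<in> E n) (Ppath n (clen n) m)"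
  unfolding Ppath_word_path
  by (rule word_path_successive_E) (use P_word_letters[of _ n "clen n" m] in \<open>force simp: is_word_def\<close>)

lemma phi_v0 [simp]: "phi n v0 = v0"
  by (simp add: phi_def)

lemma phi_nonbase: "1 \<le> t \<Longrightarrow> phi n (m, t) = Ppath n (clen n) m ! t"
  by (simp add: phi_def v0_eq)

lemma phi_cyc_nth:
  assumes "1 \<le> m" "m \<le> Suc n" "t \<le> clen (Suc n) m"
  shows "phi n (cyc (Suc n) m ! t) = Ppath n (clen n) m ! t"
proof (cases "t = 0 \<or> t = clen (Suc n) m")
  case True
  then show ?thesis
    using assms cyc_nth[OF assms] nth_word_path_word_len[of "clen n" "P_word n (clen n) m"]
    by (auto simp: Ppath_word_path clen_Suc_eq)
qed (use assms in \<open>simp add: cyc_nth phi_nonbase\<close>)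

lemma phi_E:
  assumes "(u, w) \<in> E (Suc n)"
  shows "(phi n u, phi n w) \<in> E n"
  using assms unfolding E_iff[of u w]
proof (elim disjE exE conjE)
  fix m t
  assume h: "1 \<le> m" "m \<le> Suc n" "t < clen (Suc n) m" "u = cyc (Suc n) m ! t" "w = cyc (Suc n) m ! Suc t"
  have "phi n u = Ppath n (clen n) m ! t" "phi n w = Ppath n (clen n) m ! Suc t"
    using h by (simp_all add: phi_cyc_nth)
  moreover have "Suc t < length (Ppath n (clen n) m)"
    using h by (simp add: length_Ppath)
  ultimately show ?thesis
    using successively_nth[OF Ppath_successive_E[OF h(1)]] by simp
qed (simp add: E_loop)

lemma Ppath_subset_V: "1 \<le> m \<Longrightarrow> set (Ppath n (clen n) m) \<subseteq> V n"
  using set_word_path[of "clen n" "P_word n (clen n) m"] P_word_letters[of _ n "clen n" m]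
  by (force simp: Ppath_word_path V_iff)

lemma Ppath_vertex_index_ge: "(m', r) \<in> set (Ppath n (clen n) m) \<Longrightarrow> 1 \<le> r \<Longrightarrow> m \<le> m'"
  using set_word_path[of "clen n" "P_word n (clen n) m"] P_word_letters[of m' n "clen n" m]
  by (force simp: Ppath_word_path v0_eq)

lemma phi_V:
  assumes "u \<in> V (Suc n)"
  shows "phi n u \<in> V n"
proof (cases "u = v0")
  case False
  obtain m t where u: "u = (m, t)" "1 \<le> m" "m \<le> Suc n" "1 \<le> t" "t < clen (Suc n) m"
    using V_nonbaseE[OF assms False] .
  then have "phi n u \<in> set (Ppath n (clen n) m)"
    by (simp add: phi_nonbase length_Ppath)
  then show ?thesis using Ppath_subset_V[OF u(2)] by blast
qed (simp add: V_def)

lemma phi_cycle_start: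
  assumes "1 \<le> m" "m \<le> Suc n"
  shows "phi n (m, 1) = v0"
proof -
  have "3 \<le> clen (Suc n) m" using clen_lower_bound[of m "Suc n"] assms by simp
  then have "P_word n (clen n) m \<noteq> []" using clen_Suc_eq[OF assms] by auto
  then obtain w where "P_word n (clen n) m = None # w"
    using hd_P_word by (metis list.collapse)
  then show ?thesis by (simp add: phi_nonbase Ppath_word_path word_path_Cons)
qed

subsection \<open>The inverse limit X and the shift T\<close>

lemma X_V: "x \<in> X \<Longrightarrow> x n \<in> V n"
  by (simp add: X_def)

lemma X_phi: "x \<in> X \<Longrightarrow> phi n (x (Suc n)) = x n"
  by (simp add: X_def)

fun proj_down :: "nat \<Rightarrow> nat \<Rightarrow> vert \<Rightarrow> vert" where
  "proj_down 0 n v = v"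
| "proj_down (Suc d) n v = phi n (proj_down d (Suc n) v)"

lemma proj_down_X: "x \<in> X \<Longrightarrow> proj_down d n (x (n + d)) = x n"
proof (induction d arbitrary: n)
  case (Suc d)
  then have "proj_down d (Suc n) (x (Suc n + d)) = x (Suc n)" by blast
  then show ?case using X_phi[OF Suc.prems] by simp
qed simp

lemma proj_down_v0 [simp]: "proj_down d n v0 = v0"
  by (induction d arbitrary: n) auto

lemma proj_down_Suc': "proj_down (Suc d) n v = proj_down d n (phi (n + d) v)"
  by (induction d arbitrary: n) auto

lemma proj_down_E: "(u, w) \<in> E (n + d) \<Longrightarrow> (proj_down d n u, proj_down d n w) \<in> E n"
  by (induction d arbitrary: n) (auto intro: phi_E)

lemma X_nonbase_mono:
  assumes "x \<in> X" "x n \<noteq> v0" "n \<le> n'"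
  shows "x n' \<noteq> v0"
  using proj_down_X[OF assms(1), of "n' - n" n] assms(2,3) by auto

lemma X_after_base:
  assumes "z \<in> X" "(v0, z (Suc n)) \<in> E (Suc n)"
  shows "z n = v0"
  using E_from_v0[OF assms(2)] X_phi[OF assms(1), of n] phi_cycle_start by auto

lemma phi_cycle_next:
  assumes "x \<in> X" "x n \<noteq> v0"
  shows "phi n (cycle_next (Suc n) (x (Suc n))) = cycle_next n (x n)"
proof -
  have "x (Suc n) \<noteq> v0" using X_nonbase_mono[OF assms] by simp
  then have "(x (Suc n), cycle_next (Suc n) (x (Suc n))) \<in> E (Suc n)"
    using cycle_next_E X_V[OF assms(1)] by blast
  from phi_E[OF this] show ?thesis
    using X_phi[OF assms(1)] E_nonbase_iff[OF X_V[OF assms(1)] assms(2)] by simp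
qed

lemma X_has_successor:
  assumes "x \<in> X"
  shows "\<exists>y \<in> X. \<forall>n. (x n, y n) \<in> E n"
proof (cases "\<forall>n. x n = v0")
  case True
  have "(\<lambda>n. v0) \<in> X" by (simp add: X_def V_def)
  then show ?thesis using True E_loop by (intro bexI[of _ "\<lambda>n. v0"]) auto
next
  case False
  then obtain M where M: "x M \<noteq> v0" by blast
  have nonbase: "M \<le> n \<Longrightarrow> x n \<noteq> v0" for n using X_nonbase_mono[OF assms M] by blast
  define y where "y n = (if M \<le> n then cycle_next n (x n) else proj_down (M - n) n (cycle_next M (x M)))" for n
  have yE: "(x n, y n) \<in> E n" for n
  proof (cases "M \<le> n")
    case True
    then show ?thesis using cycle_next_E X_V[OF assms] nonbase by (simp add: y_def)
  next
    case False
    have "(x M, cycle_next M (x M)) \<in> E (n + (M - n))"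
      using cycle_next_E X_V[OF assms] M False by simp
    moreover have "proj_down (M - n) n (x M) = x n"
      using proj_down_X[OF assms, of "M - n" n] False by simp
    ultimately show ?thesis
      using proj_down_E[of "x M" _ n "M - n"] False by (simp add: y_def)
  qed
  have "phi n (y (Suc n)) = y n" for n
  proof (cases "M \<le> n")
    case True
    then show ?thesis using phi_cycle_next[OF assms nonbase[OF True]] by (simp add: y_def)
  next
    case False
    then consider "M = Suc n" | "M - n = Suc (M - Suc n)" "\<not> M \<le> Suc n" by linarith
    then show ?thesis by cases (simp_all add: y_def)
  qed
  then have "y \<in> X" using E_target_in_V[OF yE] by (simp add: X_def)
  then show ?thesis using yE by blast
qed

lemma X_successor_unique:
  assumes "x \<in> X" "y \<in> X" "y' \<in> X" "\<forall>n. (x n, y n) \<in> E n" "\<forall>n. (x n, y' n) \<in> E n"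
  shows "y = y'"
proof (cases "\<forall>n. x n = v0")
  case True
  then have "y n = v0" "y' n = v0" for n
    using X_after_base assms by metis+
  then show ?thesis by auto
next
  case False
  then obtain M where M: "x M \<noteq> v0" by blast
  have above: "y n = y' n" if "M \<le> n" for n
    using E_nonbase_iff[OF X_V[OF assms(1)] X_nonbase_mono[OF assms(1) M that]] assms(4,5) by metis
  show ?thesis
  proof
    fix n
    show "y n = y' n"
      using proj_down_X[OF assms(2), of "M - n" n] proj_down_X[OF assms(3), of "M - n" n] above[of "n + (M - n)"]
      by (cases "M \<le> n") (auto intro: above)
  qed
qed

lemma T_in_X: "x \<in> X \<Longrightarrow> T x \<in> X"
  and T_E: "x \<in> X \<Longrightarrow> (x n, T x n) \<in> E n"
proof -
  assume x: "x \<in> X"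
  then obtain y where y: "y \<in> X" "\<forall>n. (x n, y n) \<in> E n" using X_has_successor by blast
  have "T x = y" unfolding T_def
    by (rule the_equality) (use y X_successor_unique[OF x] in blast)+
  then show "T x \<in> X" "(x n, T x n) \<in> E n" using y by auto
qed

lemma funpow_T_in_X: "x \<in> X \<Longrightarrow> (T ^^ j) x \<in> X"
  by (induction j) (auto simp: T_in_X)

lemma T_nonbase: "x \<in> X \<Longrightarrow> x n \<noteq> v0 \<Longrightarrow> T x n = cycle_next n (x n)"
  using E_nonbase_iff[OF X_V] T_E by blast

lemma funpow_T_along_cycle:
  assumes "x \<in> X" "x n = (m, t)" "1 \<le> t" "t + j < clen n m"
  shows "(T ^^ j) x n = (m, t + j)"
  using assms(4)
proof (induction j)
  case (Suc j)
  then have "(T ^^ j) x n = (m, t + j)" by simp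
  then show ?case
    using T_nonbase[of "(T ^^ j) x" n] funpow_T_in_X[OF assms(1)] Suc.prems assms(3)
    by (simp add: v0_eq cycle_next_def)
qed (simp add: assms(2))

lemma funpow_T_back_along_cycle:
  assumes "z \<in> X" "(T ^^ s) z n = (m, p)" "s < p" "d \<le> s"
  shows "(T ^^ (s - d)) z n = (m, p - d)"
  using assms(4)
proof (induction d)
  case (Suc d)
  then have "T ((T ^^ (s - Suc d)) z) n = (m, p - d)"
    by (simp add: Suc_diff_Suc[symmetric])
  with T_E[OF funpow_T_in_X[OF assms(1)]] have "((T ^^ (s - Suc d)) z n, (m, p - d)) \<in> E n"
    by metis
  then show ?case using E_into_nonbase Suc.prems assms(3) by fastforce
qed (simp add: assms(2))

lemma deg_le_vdeg: "deg x \<le> vdeg (x n)"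
  unfolding deg_def by (rule INF_lower) simp

lemma vdeg_pair: "1 \<le> t \<Longrightarrow> vdeg (m, t) = enat m"
  by (simp add: vdeg_def v0_eq)

lemma vdeg_le_vdeg_phi:
  assumes "v \<in> V (Suc n)"
  shows "vdeg v \<le> vdeg (phi n v)"
proof (cases "v = v0 \<or> phi n v = v0")
  case False
  then obtain m t where v: "v = (m, t)" "1 \<le> m" "m \<le> Suc n" "1 \<le> t" "t < clen (Suc n) m"
    using V_nonbaseE[OF assms] by blast
  have "phi n v \<in> V n" "phi n v \<in> set (Ppath n (clen n) m)"
    using phi_V[OF assms] v by (simp_all add: phi_nonbase length_Ppath)
  with False obtain m' r where "phi n v = (m', r)" "1 \<le> r" "m \<le> m'"
    using Ppath_vertex_index_ge by (metis V_nonbaseE)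
  then show ?thesis using v by (simp add: vdeg_pair)
qed (auto simp: vdeg_def)

lemma deg_le_vdeg_T_nonbase:
  assumes "x \<in> X" "x n \<noteq> v0"
  shows "deg x \<le> vdeg (T x n)"
proof -
  obtain m t where "x n = (m, t)" "1 \<le> t"
    using V_nonbaseE[OF X_V[OF assms(1)] assms(2)] by metis
  then have "T x n = v0 \<or> vdeg (T x n) = vdeg (x n)"
    using T_nonbase[OF assms] by (simp add: cycle_next_def vdeg_pair)
  then show ?thesis using deg_le_vdeg[of x n] by (auto simp: vdeg_def)
qed

lemma deg_le_deg_T:
  assumes "x \<in> X"
  shows "deg x \<le> deg (T x)"
  unfolding deg_def[of "T x"]
proof (rule INF_greatest)
  fix n
  show "deg x \<le> vdeg (T x n)"
  proof (cases "x n = v0")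
    case True
    show ?thesis
    proof (cases "x (Suc n) = v0")
      case True
      then have "T x n = v0" using X_after_base[OF T_in_X] T_E assms by metis
      then show ?thesis by (simp add: vdeg_def)
    next
      case False
      then have "deg x \<le> vdeg (T x (Suc n))" by (rule deg_le_vdeg_T_nonbase[OF assms])
      also have "\<dots> \<le> vdeg (T x n)"
        using vdeg_le_vdeg_phi[OF X_V] X_phi T_in_X[OF assms] by metis
      finally show ?thesis .
    qed
  qed (rule deg_le_vdeg_T_nonbase[OF assms])
qed

lemma deg_le_deg_funpow_T: "x \<in> X \<Longrightarrow> deg x \<le> deg ((T ^^ j) x)"
  by (induction j) (auto intro: order_trans deg_le_deg_T funpow_T_in_X)

subsection \<open>Projecting the beginning of a deep cycle\<close>

text \<open>shadow n a is what level n sees at offset D+1 of the letter a of a word at level n + D.\<close>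

definition shadow :: "nat \<Rightarrow> nat option \<Rightarrow> vert" where
  "shadow n a = (case a of None \<Rightarrow> v0 | Some m \<Rightarrow> if m \<le> n then (m, 1) else v0)"

lemma shadow_inj:
  assumes "is_word n [a, b]" "shadow n a = shadow n b"
  shows "a = b"
  using assms by (cases a; cases b) (auto simp: is_word_def shadow_def v0_eq split: if_splits)

lemma Ppath_Suc_self_nth: "t \<le> clen (Suc n) (Suc n) \<Longrightarrow> Ppath n (clen n) (Suc n) ! t = v0"
  using P_word_Suc_self[of n "clen n"] length_Ppath[of "Suc n" n]
  by (auto simp: Ppath_word_path word_path_replicate_None simp del: replicate_Suc)

lemma Ppath_nth_Suc:
  assumes m: "1 \<le> m" "m \<le> n" and t: "t < clen n m"
  shows "Ppath n (clen n) m ! Suc t = cycle_vertex m t"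
proof -
  obtain w where "P_word n (clen n) m = None # Some m # w"
    using P_word_start[OF m] by metis
  then have "Ppath n (clen n) m ! Suc t = word_path (clen n) (Some m # w) ! t"
    using nth_word_path_Cons_shift[of "clen n" None _ t] by (simp add: Ppath_word_path)
  also have "\<dots> = cycle_vertex m t"
    using t nth_letter_seg_Some[of t "clen n" m] by (simp add: nth_word_path_Cons_less)
  finally show ?thesis .
qed

text \<open>Every P_{l,m} with m \<le> l starts with the loop followed by c_{l,m}, so each application of
  phi shifts the offset within a cycle down by one.\<close>

lemma proj_down_cycle_offset:
  assumes "1 \<le> m" "m \<le> n + D" "1 \<le> t" "t \<le> D + 1"
  shows "proj_down D n (m, t) = (if t = D + 1 \<and> m \<le> n then (m, 1) else v0)"
  using assms(2-4)
proof (induction D arbitrary: t)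
  case (Suc D)
  have step: "proj_down (Suc D) n (m, t) = proj_down D n (Ppath (n + D) (clen (n + D)) m ! t)"
    using Suc.prems by (subst proj_down_Suc') (simp add: phi_nonbase)
  show ?case
  proof (cases "m = Suc (n + D)")
    case True
    have "t \<le> clen (Suc (n + D)) m"
      using clen_lower_bound[of m "Suc (n + D)"] assms(1) True Suc.prems by simp
    then show ?thesis using step True Ppath_Suc_self_nth by simp
  next
    case False
    then have m: "m \<le> n + D" using Suc.prems by simp
    obtain t' where t': "t = Suc t'" using Suc.prems by (cases t) auto
    have "t' < clen (n + D) m"
      using clen_lower_bound[of m "n + D"] assms(1) m Suc.prems t' by simp
    then have "proj_down (Suc D) n (m, t) = proj_down D n (cycle_vertex m t')"
      using step t' Ppath_nth_Suc[OF assms(1) m] by simp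
    then show ?thesis
      using Suc.IH[OF m, of t'] Suc.prems t' by (cases "t' = 0") (auto simp: cycle_vertex_def)
  qed
qed simp

lemma proj_down_word_path_prefix:
  assumes "is_word (n + D) w" "t \<le> D" "t < word_len (clen (n + D)) w"
  shows "proj_down D n (word_path (clen (n + D)) w ! t) = v0"
proof -
  let ?L = "clen (n + D)"
  obtain c where c: "c < length w" "word_len ?L (take c w) \<le> t"
    "t < word_len ?L (take c w) + length (letter_seg ?L (w ! c))"
    "word_path ?L w ! t = letter_seg ?L (w ! c) ! (t - word_len ?L (take c w))"
    using nth_word_path_in_letter[OF assms(3)] by blast
  define ofs where "ofs = t - word_len ?L (take c w)"
  have "ofs \<le> D" using assms(2) by (simp add: ofs_def)
  show ?thesis
  proof (cases "w ! c")
    case (Some m)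
    have m: "1 \<le> m" "m \<le> n + D" using assms(1) Some c(1) nth_mem unfolding is_word_def by metis+
    have "ofs < clen (n + D) m" using clen_lower_bound[OF m] \<open>ofs \<le> D\<close> by simp
    then have "word_path ?L w ! t = cycle_vertex m ofs"
      using c(4) Some nth_letter_seg_Some[of ofs ?L m] by (simp add: ofs_def)
    then show ?thesis
      using proj_down_cycle_offset[OF m, of ofs] \<open>ofs \<le> D\<close> by (auto simp: cycle_vertex_def)
  qed (use c in \<open>simp add: ofs_def\<close>)
qed

lemma proj_down_word_path_letter:
  assumes "is_word (n + D) (a # w)" "D + 1 < word_len (clen (n + D)) (a # w)"
  shows "proj_down D n (word_path (clen (n + D)) (a # w) ! (D + 1)) = shadow n a"
proof (cases a)
  case None
  then show ?thesis
    using proj_down_word_path_prefix[of n D w D] nth_word_path_Cons_shift[of "clen (n + D)" None w D] assms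
    by (simp add: is_word_def shadow_def)
next
  case (Some m)
  have m: "1 \<le> m" "m \<le> n + D" using assms(1) Some by (auto simp: is_word_def)
  have "D + 1 < clen (n + D) m" using clen_lower_bound[OF m] by simp
  then have "word_path (clen (n + D)) (a # w) ! (D + 1) = (m, D + 1)"
    using Some nth_letter_seg_Some[of "D + 1" "clen (n + D)" m]
    by (simp add: nth_word_path_Cons_less cycle_vertex_def)
  then show ?thesis using proj_down_cycle_offset[OF m, of "D + 1"] Some by (simp add: shadow_def)
qed

subsection \<open>Two orbits of degree i cannot drift apart inside c_{l+1,i}\<close>

lemma cycle_lift:
  assumes "z \<in> X" "z n = (i, p)" "1 \<le> p" "enat i \<le> deg z"
  obtains q where "z (Suc n) = (i, q)" "1 \<le> q" "q < clen (Suc n) i" "Ppath n (clen n) i ! q = (i, p)"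
proof -
  have "z (Suc n) \<noteq> v0"
  proof
    assume "z (Suc n) = v0"
    then have "z n = v0" using X_phi[OF assms(1), of n] by simp
    then show False using assms(2,3) by (simp add: v0_eq)
  qed
  then obtain m q where z: "z (Suc n) = (m, q)" "1 \<le> m" "m \<le> Suc n" "1 \<le> q" "q < clen (Suc n) m"
    using V_nonbaseE[OF X_V[OF assms(1)]] by metis
  have P: "Ppath n (clen n) m ! q = (i, p)"
    using X_phi[OF assms(1), of n] z assms(2) by (simp add: phi_nonbase)
  then have "(i, p) \<in> set (Ppath n (clen n) m)"
    using z by (metis length_Ppath less_SucI nth_mem Suc_eq_plus1)
  then have "m \<le> i" using Ppath_vertex_index_ge assms(3) by blast
  moreover have "enat i \<le> enat m"
    using order_trans[OF assms(4) deg_le_vdeg[of z "Suc n"]] z by (simp add: vdeg_pair)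
  ultimately show ?thesis using that z P by auto
qed

lemma drop_first_mismatch:
  assumes "a + t0 < length W" "b + t0 < length W" "W ! (a + t0) \<noteq> W ! (b + t0)"
  obtains u t where "t \<le> t0" "W ! (a + t) \<noteq> W ! (b + t)"
    "drop a W = u @ W ! (a + t) # drop (Suc (a + t)) W" "drop b W = u @ W ! (b + t) # drop (Suc (b + t)) W"
proof -
  define mism where "mism t \<longleftrightarrow> W ! (a + t) \<noteq> W ! (b + t)" for t
  obtain t where t: "mism t" "\<forall>t'<t. \<not> mism t'"
    using exists_least_iff[of mism] assms(3) unfolding mism_def by blast
  then have "t \<le> t0" using assms(3) not_less unfolding mism_def by blast
  define u where "u = take t (drop b W)"
  have take_a: "take t (drop a W) = u"
    unfolding u_def by (rule nth_equalityI) (use t \<open>t \<le> t0\<close> assms(1,2) in \<open>auto simp: mism_def\<close>)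
  have decomp: "drop c W = take t (drop c W) @ W ! (c + t) # drop (Suc (c + t)) W"
    if "c + t < length W" for c
    using that by (metis Cons_nth_drop_Suc append_take_drop_id drop_drop add.commute)
  have "a + t < length W" "b + t < length W" using \<open>t \<le> t0\<close> assms(1,2) by linarith+
  then have "drop a W = u @ W ! (a + t) # drop (Suc (a + t)) W" "drop b W = u @ W ! (b + t) # drop (Suc (b + t)) W"
    using decomp[of a] decomp[of b] unfolding take_a u_def[symmetric] by simp_all
  then show ?thesis using that \<open>t \<le> t0\<close> t(1) unfolding mism_def by blast
qed

lemma P_word_escape:
  assumes "1 \<le> i" "i < n" "n \<le> l" and W: "W = P_word l L i"
  obtains g \<mu> where "g < length W" "W ! g = Some \<mu>" "2 \<le> \<mu>" "\<mu> \<le> n" "\<mu> \<noteq> i"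
    "\<And>t. t < g \<Longrightarrow> W ! t = None \<or> W ! t = Some 1 \<or> W ! t = Some i"
    "\<And>t. t < length W \<Longrightarrow> W ! t = Some i \<Longrightarrow> t < g"
proof -
  obtain pre \<mu> post where sp: "W = pre @ Some \<mu> # post" "2 \<le> \<mu>" "\<mu> \<le> n" "\<mu> \<noteq> i"
    "\<forall>a\<in>set pre. a = None \<or> a = Some 1 \<or> a = Some i" "Some i \<notin> set (Some \<mu> # post)"
    using P_word_eq_split[OF assms(1-3)] W by metis
  have "t < length pre" if "t < length W" "W ! t = Some i" for t
  proof (rule ccontr)
    assume "\<not> t < length pre"
    then have "W ! t = (Some \<mu> # post) ! (t - length pre)" using sp(1) by (simp add: nth_append)
    moreover have "t - length pre < length (Some \<mu> # post)" using sp(1) that(1) by simp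
    ultimately have "W ! t \<in> set (Some \<mu> # post)" by (metis nth_mem)
    then show False using that(2) sp(6) by simp
  qed
  then show ?thesis
    using that[of "length pre" \<mu>] sp by (auto simp: nth_append)
qed

lemma P_word_first_mismatch:
  assumes "1 \<le> i" "i < n" "n \<le> l" and W: "W = P_word l L i"
    and "a < b" "b < length W" "W ! a = Some i" "W ! b = Some i"
  obtains u \<alpha> \<beta> ra rb where "drop (Suc a) W = u @ \<alpha> # ra" "drop (Suc b) W = u @ \<beta> # rb"
    "shadow n \<alpha> \<noteq> shadow n \<beta>" "\<exists>\<mu>. Some \<mu> \<in> set (\<beta> # rb) \<and> 1 \<le> \<mu> \<and> \<mu> \<le> n"
proof -
  obtain g \<mu> where g: "g < length W" "W ! g = Some \<mu>" "2 \<le> \<mu>" "\<mu> \<le> n" "\<mu> \<noteq> i"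
    and before_g: "\<And>t. t < g \<Longrightarrow> W ! t = None \<or> W ! t = Some 1 \<or> W ! t = Some i"
    and "b < g"
    using P_word_escape[OF assms(1-4)] assms(6,8) by metis
  define t0 where "t0 = g - Suc b"
  have "Suc a + t0 < g" "Suc b + t0 = g" using \<open>b < g\<close> assms(5) by (simp_all add: t0_def)
  then have bounds: "Suc a + t0 < length W" "Suc b + t0 < length W" using g(1) by simp_all
  have "W ! (Suc a + t0) \<noteq> W ! (Suc b + t0)"
    using before_g[of "Suc a + t0"] g(2,3,5) \<open>Suc a + t0 < g\<close> \<open>Suc b + t0 = g\<close> by auto
  then obtain u t where t: "t \<le> t0" "W ! (Suc a + t) \<noteq> W ! (Suc b + t)"
    and split: "drop (Suc a) W = u @ W ! (Suc a + t) # drop (Suc (Suc a + t)) W"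
      "drop (Suc b) W = u @ W ! (Suc b + t) # drop (Suc (Suc b + t)) W"
    by (rule drop_first_mismatch[OF bounds])
  have letter: "is_word n [W ! t']" if "t' \<le> g" for t'
    using before_g[of t'] g assms(1,2) that by (cases "t' = g") (auto simp: is_word_def)
  have "Suc a + t \<le> g" "Suc b + t \<le> g"
    using t(1) \<open>Suc a + t0 < g\<close> \<open>Suc b + t0 = g\<close> by linarith+
  then have "is_word n [W ! (Suc a + t), W ! (Suc b + t)]"
    using letter unfolding is_word_def by (metis insert_iff list.set(2) empty_iff list.set(1))
  then have "shadow n (W ! (Suc a + t)) \<noteq> shadow n (W ! (Suc b + t))"
    using t(2) shadow_inj by blast
  moreover have "Some \<mu> \<in> set (W ! (Suc b + t) # drop (Suc (Suc b + t)) W)"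
  proof -
    have "drop (Suc b + t) W ! (g - (Suc b + t)) = Some \<mu>" "g - (Suc b + t) < length (drop (Suc b + t) W)"
      using g \<open>Suc b + t \<le> g\<close> by simp_all
    then have "Some \<mu> \<in> set (drop (Suc b + t) W)" by (metis nth_mem)
    then show ?thesis using Cons_nth_drop_Suc[of "Suc b + t" W] \<open>Suc b + t \<le> g\<close> g(1) by simp
  qed
  ultimately show ?thesis
    using g(3,4) by (intro that[OF split]) auto
qed

text \<open>The exponent counts the steps out of the c-th letter of P_{l,i}, through u, to the
  (D+1)-th vertex of the letter \<gamma>.\<close>

lemma funpow_T_shadow:
  fixes n D l i :: nat
  defines "L \<equiv> clen l" and "W \<equiv> P_word l (clen l) i"
  assumes l: "l = n + D" and z_X: "z \<in> X" and i: "1 \<le> i" "i \<le> l"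
    and c: "c < length W" "W ! c = Some i" and p: "1 \<le> p" "p < clen l i"
    and z: "z (Suc l) = (i, word_len L (take c W) + p)"
    and split: "drop (Suc c) W = u @ \<gamma> # r"
    and bound: "word_len L (take c W) + p + (clen l i - p + word_len L u + D + 1) < clen (Suc l) i"
  shows "(T ^^ (clen l i - p + word_len L u + D + 1)) z n = shadow n \<gamma>"
proof -
  define J where "J = clen l i - p + word_len L u + D + 1"
  define q where "q = word_len L (take c W) + p"
  have lenW: "word_len L W = clen (Suc l) i"
    using clen_Suc_eq[of i l] i by (simp add: L_def W_def)
  have "length (letter_seg L (Some i)) = clen l i"
    using clen_ge_2[OF i] by (simp add: L_def)
  then have pos: "q + J = word_len L (take (Suc c) W) + (word_len L u + (D + 1))"
    using word_len_take_Suc[OF c(1)] c(2) p(2) by (simp add: q_def J_def)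
  have "1 \<le> q" "q + J < clen (Suc l) i"
    using p(1) bound by (simp_all add: q_def J_def)
  then have "(T ^^ J) z (Suc l) = (i, q + J)"
    using funpow_T_along_cycle[OF z_X z[folded q_def]] by blast
  then have "(T ^^ J) z l = Ppath l L i ! (q + J)"
    using X_phi[OF funpow_T_in_X[OF z_X], of l J] phi_nonbase[of "q + J" l i] \<open>1 \<le> q\<close>
    by (simp add: L_def)
  also have "\<dots> = word_path L (u @ \<gamma> # r) ! (word_len L u + (D + 1))"
    unfolding pos Ppath_word_path L_def W_def[symmetric] split[symmetric]
    by (rule nth_word_path_drop) (use c(1) in simp)
  also have "\<dots> = word_path L (\<gamma> # r) ! (D + 1)"
    using nth_word_path_drop[of "length u" "u @ \<gamma> # r" L "D + 1"] by simp
  finally have at_l: "(T ^^ J) z l = word_path L (\<gamma> # r) ! (D + 1)" .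
  have "is_word l (\<gamma> # r)"
    using is_word_drop[OF is_word_P_word[OF i(1), of l "clen l"], of "Suc c"] split
    by (simp add: W_def is_word_def)
  moreover have "D + 1 < word_len L (\<gamma> # r)"
    using bound pos lenW word_len_take_drop[of L W "Suc c"] split by (simp add: q_def J_def)
  ultimately have "proj_down D n ((T ^^ J) z (n + D)) = shadow n \<gamma>"
    using at_l proj_down_word_path_letter by (simp add: L_def l)
  then show ?thesis
    using proj_down_X[OF funpow_T_in_X[OF z_X], of D n J] by (simp add: J_def)
qed

text \<open>If two orbits that agree at level n sat in different copies of c_{l,i} inside c_{l+1,i}, then
  by P_word_first_mismatch they would reach distinct shadows at level n after the same time.\<close>

lemma cycle_copies_not_shifted:
  fixes n D l i :: nat
  assumes l: "l = n + D" and i: "1 \<le> i" "i < n" and X: "z1 \<in> X" "z2 \<in> X"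
    and z: "z1 (Suc l) = (i, q1)" "z2 (Suc l) = (i, q2)" "q1 < q2" "q2 < clen (Suc l) i"
    and P: "Ppath l (clen l) i ! q1 = (i, p)" "Ppath l (clen l) i ! q2 = (i, p)" "1 \<le> p"
    and agree: "\<forall>j. (T ^^ j) z1 n = (T ^^ j) z2 n"
  shows False
proof -
  define L where "L = clen l"
  define W where "W = P_word l (clen l) i"
  have "n \<le> l" and il: "1 \<le> i" "i \<le> l" using l i by simp_all
  have lenW: "word_len L W = clen (Suc l) i"
    using clen_Suc_eq[of i l] il by (simp add: L_def W_def)
  have seg: "length (letter_seg L (Some i)) = clen l i"
    using clen_ge_2[OF il] by (simp add: L_def)
  have path: "Ppath l L i = word_path L W" by (simp add: W_def L_def Ppath_word_path)
  obtain a where a: "a < length W" "W ! a = Some i" "q1 = word_len L (take a W) + p" "p < clen l i"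
    using nth_word_path_eq_cycle_pos[of q1 L W i p] z(3,4) P(1,3) lenW path L_def by auto
  obtain b where b: "b < length W" "W ! b = Some i" "q2 = word_len L (take b W) + p"
    using nth_word_path_eq_cycle_pos[of q2 L W i p] z(4) P(2,3) lenW path L_def by auto
  have "a < b"
    using word_len_take_mono[of b a L W] z(3) a(3) b(3) by (cases "a < b") auto
  obtain u \<alpha> \<beta> ra rb where split: "drop (Suc a) W = u @ \<alpha> # ra" "drop (Suc b) W = u @ \<beta> # rb"
      and "shadow n \<alpha> \<noteq> shadow n \<beta>" and "\<exists>\<mu>. Some \<mu> \<in> set (\<beta> # rb) \<and> 1 \<le> \<mu> \<and> \<mu> \<le> n"
    by (rule P_word_first_mismatch[OF i \<open>n \<le> l\<close> W_def \<open>a < b\<close> b(1) a(2) b(2)])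
  then obtain \<mu> where \<mu>: "Some \<mu> \<in> set (\<beta> # rb)" "1 \<le> \<mu>" "\<mu> \<le> n" by blast
  define J where "J = clen l i - p + word_len L u + D + 1"
  have "l + 2 \<le> clen l \<mu>" using clen_lower_bound[of \<mu> l] \<mu> \<open>n \<le> l\<close> by simp
  then have "word_len L u + D + 2 \<le> word_len L (drop (Suc b) W)"
    using length_letter_seg_le_word_len[OF \<mu>(1), of L] split(2) l by (simp add: L_def)
  then have bound2: "q2 + J < clen (Suc l) i"
    using word_len_take_Suc[OF b(1)] word_len_take_drop[of L W "Suc b"] b(2,3) a(4) seg lenW
    by (simp add: J_def)
  have "(T ^^ J) z1 n = shadow n \<alpha>"
    unfolding J_def L_def
    by (rule funpow_T_shadow[OF l X(1) il a(1,2)[unfolded W_def] P(3) a(4) _ split(1)[unfolded W_def]])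
      (use z(1,3) a(3) bound2 in \<open>simp_all add: J_def L_def W_def\<close>)
  moreover have "(T ^^ J) z2 n = shadow n \<beta>"
    unfolding J_def L_def
    by (rule funpow_T_shadow[OF l X(2) il b(1,2)[unfolded W_def] P(3) a(4) _ split(2)[unfolded W_def]])
      (use z(2) b(3) bound2 in \<open>simp_all add: J_def L_def W_def\<close>)
  ultimately show False using agree \<open>shadow n \<alpha> \<noteq> shadow n \<beta>\<close> by metis
qed

lemma same_cycle_position_Suc:
  assumes "1 \<le> i" "i < n" "n \<le> l" "z1 \<in> X" "z2 \<in> X" "enat i \<le> deg z1" "enat i \<le> deg z2"
    and z: "z1 l = (i, p)" "z2 l = (i, p)" "1 \<le> p"
    and agree: "\<forall>j. (T ^^ j) z1 n = (T ^^ j) z2 n"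
  obtains q where "z1 (Suc l) = (i, q)" "z2 (Suc l) = (i, q)" "p < q"
proof -
  obtain D where l: "l = n + D" using assms(3) le_iff_add by blast
  obtain q1 where q1: "z1 (Suc l) = (i, q1)" "1 \<le> q1" "q1 < clen (Suc l) i" "Ppath l (clen l) i ! q1 = (i, p)"
    using cycle_lift[OF assms(4) z(1,3) assms(6)] by blast
  obtain q2 where q2: "z2 (Suc l) = (i, q2)" "1 \<le> q2" "q2 < clen (Suc l) i" "Ppath l (clen l) i ! q2 = (i, p)"
    using cycle_lift[OF assms(5) z(2,3) assms(7)] by blast
  have "q1 = q2"
  proof (rule ccontr)
    assume "q1 \<noteq> q2"
    then consider "q1 < q2" | "q2 < q1" by linarith
    then show False
    proof cases
      case 1
      show False
        using cycle_copies_not_shifted[OF l assms(1,2,4,5) q1(1) q2(1) 1 q2(3) q1(4) q2(4) z(3) agree] .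
    next
      case 2
      show False
        using cycle_copies_not_shifted[OF l assms(1,2,5,4) q2(1) q1(1) 2 q1(3) q2(4) q1(4) z(3)] agree
        by simp
    qed
  qed
  define W where "W = P_word l (clen l) i"
  have il: "1 \<le> i" "i \<le> l" using assms(1-3) by simp_all
  obtain a where a: "a < length W" "W ! a = Some i" "q1 = word_len (clen l) (take a W) + p"
    using nth_word_path_eq_cycle_pos[of q1 "clen l" W i p] q1 z(3) clen_Suc_eq[OF il(1)] il
    by (auto simp: W_def Ppath_word_path)
  have "W ! 0 = None" using P_word_start[OF il, of "clen l"] W_def by (metis nth_Cons_0)
  then have "1 \<le> a" using a(2) by (cases a) auto
  moreover have "take 1 W = [None]" using a(1) \<open>W ! 0 = None\<close> by (cases W) auto
  ultimately have "1 \<le> word_len (clen l) (take a W)"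
    using word_len_take_mono[of 1 a "clen l" W] by simp
  then show ?thesis using that q1 q2 \<open>q1 = q2\<close> a(3) by simp
qed

lemma same_cycle_position_above:
  assumes "1 \<le> i" "i < n" "z1 \<in> X" "z2 \<in> X" "enat i \<le> deg z1" "enat i \<le> deg z2"
    and "z1 n = (i, 1)" "z2 n = (i, 1)"
    and agree: "\<forall>j. (T ^^ j) z1 n = (T ^^ j) z2 n"
  shows "\<exists>p. z1 (n + d) = (i, p) \<and> z2 (n + d) = (i, p) \<and> d < p"
proof (induction d)
  case (Suc d)
  then obtain p where "z1 (n + d) = (i, p)" "z2 (n + d) = (i, p)" "d < p" by blast
  moreover obtain q where "z1 (Suc (n + d)) = (i, q)" "z2 (Suc (n + d)) = (i, q)" "p < q"
    using same_cycle_position_Suc[OF assms(1,2) _ assms(3-6) calculation(1,2) _ agree] calculation(3) by auto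
  ultimately show ?case by auto
qed (use assms(7,8) in simp)

lemma funpow_T_agree_before:
  assumes "x \<in> X" "y \<in> X" "(T ^^ s) x n = (m, p)" "(T ^^ s) y n = (m, p)" "s < p" "j \<le> s"
  shows "(T ^^ j) x n = (T ^^ j) y n"
  using funpow_T_back_along_cycle[OF assms(1,3,5), of "s - j"] funpow_T_back_along_cycle[OF assms(2,4,5), of "s - j"]
    assms(6) by simp

lemma orbits_agree_since_cycle_entry:
  assumes "1 \<le> i" "i < n" "x \<in> X" "y \<in> X" "enat i \<le> deg x" "enat i \<le> deg y"
    and start: "(T ^^ s) x n = (i, 1)" "(T ^^ s) y n = (i, 1)"
    and later: "\<forall>j\<ge>s. (T ^^ j) x n = (T ^^ j) y n"
  shows "(T ^^ j) x n = (T ^^ j) y n"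
proof (cases "j \<le> s")
  case True
  have X: "(T ^^ s) x \<in> X" "(T ^^ s) y \<in> X"
    using assms(3,4) by (simp_all add: funpow_T_in_X)
  have deg: "enat i \<le> deg ((T ^^ s) x)" "enat i \<le> deg ((T ^^ s) y)"
    using assms(3-6) deg_le_deg_funpow_T order_trans by metis+
  have "\<forall>j. (T ^^ j) ((T ^^ s) x) n = (T ^^ j) ((T ^^ s) y) n"
    using later by (metis comp_apply funpow_add le_add2)
  then obtain p where p: "(T ^^ s) x (n + s) = (i, p)" "(T ^^ s) y (n + s) = (i, p)" "s < p"
    using same_cycle_position_above[OF assms(1,2) X deg start] by blast
  have "(T ^^ j) x (n + s) = (T ^^ j) y (n + s)"
    using True by (rule funpow_T_agree_before[OF assms(3,4) p])
  then show ?thesis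
    using proj_down_X[OF funpow_T_in_X[OF assms(3)], of s n j]
      proj_down_X[OF funpow_T_in_X[OF assms(4)], of s n j] by metis
qed (use later in simp)

theorem lemma3p12:
  fixes x y :: "nat \<Rightarrow> vert" and i n k :: nat
  assumes "x \<in> X" and "y \<in> X"
    and "i \<ge> 1" and "deg x = enat i" and "deg y = enat i"
    and "n > i + 2" and "k \<ge> 1"
    and "\<forall>j\<ge>k. (T ^^ j) x n = (T ^^ j) y n"
    and "\<forall>t\<le>clen n i. (T ^^ (k + t)) x n = cyc n i ! t"
  shows "\<forall>j. (T ^^ j) x n = (T ^^ j) y n"
proof
  fix j
  have "i < n" using assms(6) by simp
  have start_x: "(T ^^ Suc k) x n = (i, 1)"
    using assms(9)[rule_format, of 1] clen_ge_2[OF assms(3) less_imp_le[OF \<open>i < n\<close>]]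
      cyc_nth[OF assms(3) less_imp_le[OF \<open>i < n\<close>], of 1]
    by simp
  have start_y: "(T ^^ Suc k) y n = (i, 1)"
    using start_x assms(8) by (metis le_SucI order_refl)
  have later: "\<forall>j\<ge>Suc k. (T ^^ j) x n = (T ^^ j) y n"
    using assms(8) by simp
  have "enat i \<le> deg x" "enat i \<le> deg y"
    using assms(4,5) by simp_all
  then show "(T ^^ j) x n = (T ^^ j) y n"
    by (rule orbits_agree_since_cycle_entry[OF assms(3) \<open>i < n\<close> assms(1,2) _ _ start_x start_y later])
qed

end
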